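(* Let $\mathcal{R}_0>0$ and let $\kappa:[0,1]\to[0,\infty)$ be a non-decreasing function with $\kappa(0)=0$. Consider the initial value problem \[ \frac{ds}{d\tau}=-\mathcal{R}_0\frac{1}{1+\kappa(i)}\,s\,i,\qquad \frac{di}{d\tau}=\Big(\mathcal{R}_0\frac{1}{1+\kappa(i)}\,s-1\Big)i, \] with initial conditions $s(0)=s_0\ge 0$, $i(0)=i_0>0$, $s_0+i_0=1$ (initial recovered fraction $r_0=0$), satisfying $s_0\mathcal{R}_0>1+\kappa(i_0)$, with non-negative solution $(s(\tau),i(\tau))$ converging to a disease-free equilibrium $(\bar s,0)$. Let $(s^0(\tau),i^0(\tau))$ be the solution of the same initial value problem with $\kappa\equiv0$ (the classical SIR model $ds/d\tau=-\mathcal{R}_0 s i$, $di/d\tau=(\mathcal{R}_0 s-1)i$), converging to the equilibrium $(\bar s^0,0)$. Then $\bar s\ge \bar s^0$.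
   Context: This is the non-dimensional "feedback SIR" (fSIR) model: $s$ and $i$ are the fractions of susceptible and infected individuals, $r=1-s-i$ the recovered fraction, $\tau$ is rescaled time, $\mathcal{R}_0$ the basic reproduction number, and $\kappa(i)$ the "mitigation function" with $\mathcal{R}(i)=\mathcal{R}_0/(1+\kappa(i))$. The equilibrium susceptible fraction is $\bar s=\lim_{\tau\to\infty}s(\tau)$. *)

theory Defs
  imports "HOL-Analysis.Analysis"
begin

end

(* Along any solution of s' = - b s i, i' = (b s - 1) i the classical first integral
   V(s, i) = s exp (- R0 (s + i)) has derivative exp (- R0 (s + i)) s i (R0 - b).
   For the classical model (b = R0) V is conserved, so g(sbar0) = V(s0, i0) with
   g(x) = x exp (- R0 x); with mitigation b = R0 / (1 + kappa i) <= R0, V increases, so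
   g(sbar) >= V(s0, i0) = g(sbar0). Since g is increasing on [0, 1/R0] and the classical
   final size lies below the herd-immunity threshold 1/R0, sbar >= sbar0. *)

theory Submission
  imports Defs
begin

definition sir_trajectory :: "(real \<Rightarrow> real) \<Rightarrow> (real \<Rightarrow> real) \<Rightarrow> (real \<Rightarrow> real) \<Rightarrow> bool" where
  "sir_trajectory \<beta> s i \<longleftrightarrow> (\<forall>t\<ge>0.
     (s has_real_derivative - \<beta> t * s t * i t) (at t within {0..}) \<and>
     (i has_real_derivative (\<beta> t * s t - 1) * i t) (at t within {0..}))"

definition sir_integral :: "real \<Rightarrow> real \<Rightarrow> real \<Rightarrow> real" where
  "sir_integral R0 s i = s * exp (- R0 * (s + i))"

lemma has_real_derivative_at_if_within_atLeast:
  fixes f :: "real \<Rightarrow> real"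
  assumes "(f has_real_derivative D) (at t within {a..})" "a < t"
  shows "(f has_real_derivative D) (at t)"
proof -
  have "at t within {a..} = at t" using assms(2) by (intro at_within_interior) simp
  with assms(1) show ?thesis by simp
qed

lemma continuous_on_atLeast_if_has_real_derivative:
  fixes f :: "real \<Rightarrow> real"
  assumes "\<forall>t\<ge>a. (f has_real_derivative f' t) (at t within {a..})"
  shows "continuous_on {a..} f"
  using assms by (auto simp: continuous_on_eq_continuous_within intro: DERIV_continuous)

lemma mono_on_atLeast_if_has_real_derivative_nonneg:
  fixes f :: "real \<Rightarrow> real"
  assumes deriv: "\<forall>t\<ge>a. (f has_real_derivative f' t) (at t within {a..})"
    and nonneg: "\<forall>t\<ge>a. f' t \<ge> 0"
  shows "mono_on {a..} f"
proof (rule mono_onI)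
  fix x y assume "x \<in> {a..}" "y \<in> {a..}" "x \<le> y"
  show "f x \<le> f y"
  proof (rule DERIV_nonneg_imp_increasing_open[OF \<open>x \<le> y\<close>])
    fix z assume "x < z" "z < y"
    with \<open>x \<in> {a..}\<close> have "a < z" by simp
    then have "(f has_real_derivative f' z) (at z)"
      using deriv by (intro has_real_derivative_at_if_within_atLeast) auto
    with nonneg \<open>a < z\<close> show "\<exists>D. DERIV f z :> D \<and> D \<ge> 0" by auto
  next
    show "continuous_on {x..y} f"
      by (rule continuous_on_subset[OF continuous_on_atLeast_if_has_real_derivative[OF deriv]])
        (use \<open>x \<in> {a..}\<close> in auto)
  qed
qed

lemma first_hitting_time:
  fixes f :: "real \<Rightarrow> real"
  assumes cont: "continuous_on {a..} f" and "f a < m" "a \<le> t1" "m \<le> f t1"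
  obtains t where "a < t" "f t = m" "\<forall>u\<in>{a..<t}. f u < m"
proof -
  define S where "S = {a..} \<inter> f -` {m..}"
  have "t1 \<in> S" using assms by (simp add: S_def)
  moreover have "bdd_below S" unfolding S_def by (rule bdd_below_mono[of "{a..}"]) auto
  moreover have "closed S"
    unfolding S_def using cont by (rule continuous_closed_preimage) auto
  ultimately have "Inf S \<in> S" by (intro closed_contains_Inf) auto
  then have "a \<le> Inf S" "m \<le> f (Inf S)" by (auto simp: S_def)
  have below: "f u < m" if "u \<in> {a..<Inf S}" for u
  proof (rule ccontr)
    assume "\<not> f u < m"
    with that have "u \<in> S" by (simp add: S_def)
    then have "Inf S \<le> u" using \<open>bdd_below S\<close> by (rule cInf_lower)
    with that show False by simp
  qed
  have "a < Inf S"
    using \<open>a \<le> Inf S\<close> \<open>m \<le> f (Inf S)\<close> \<open>f a < m\<close> by (metis order.strict_iff_order not_le)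
  have "isCont f (Inf S)"
    using cont \<open>a < Inf S\<close> by (intro continuous_on_interior) auto
  then have "(f \<longlongrightarrow> f (Inf S)) (at_left (Inf S))"
    by (simp add: isCont_def filterlim_at_split)
  moreover have "\<forall>\<^sub>F u in at_left (Inf S). f u \<le> m"
    using eventually_at_left_real[OF \<open>a < Inf S\<close>] by eventually_elim (simp add: less_imp_le below)
  ultimately have "f (Inf S) \<le> m" by (rule tendsto_upperbound) simp
  with \<open>m \<le> f (Inf S)\<close> have "f (Inf S) = m" by simp
  with that[OF \<open>a < Inf S\<close>] below show thesis by blast
qed

lemma has_real_derivative_sir_integral_susceptible:
  "((\<lambda>x. sir_integral R0 x 0) has_real_derivative exp (- R0 * x) * (1 - R0 * x)) (at x)"
  unfolding sir_integral_def by (auto intro!: derivative_eq_intros simp: algebra_simps)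

lemma sir_integral_strict_mono_below_threshold:
  fixes R0 x y :: real
  assumes "R0 > 0" "0 \<le> x" "x < y" "y \<le> 1 / R0"
  shows "sir_integral R0 x 0 < sir_integral R0 y 0"
proof (rule DERIV_pos_imp_increasing_open[OF \<open>x < y\<close>])
  fix z assume "x < z" "z < y"
  have "R0 * z < R0 * y" using \<open>z < y\<close> \<open>R0 > 0\<close> by simp
  moreover have "R0 * y \<le> 1" using assms by (simp add: field_simps)
  ultimately have "R0 * z < 1" by linarith
  then show "\<exists>D. ((\<lambda>x. sir_integral R0 x 0) has_real_derivative D) (at z) \<and> D > 0"
    using has_real_derivative_sir_integral_susceptible[of R0 z] by auto
qed (auto simp: sir_integral_def intro!: continuous_intros)

lemma sir_integral_strict_antimono_above_threshold:
  fixes R0 x y :: real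
  assumes "R0 > 0" "1 / R0 \<le> x" "x < y"
  shows "sir_integral R0 y 0 < sir_integral R0 x 0"
proof (rule DERIV_neg_imp_decreasing_open[OF \<open>x < y\<close>])
  fix z assume "x < z" "z < y"
  have "R0 * x < R0 * z" using \<open>x < z\<close> \<open>R0 > 0\<close> by simp
  moreover have "1 \<le> R0 * x" using assms by (simp add: field_simps)
  ultimately have "R0 * z > 1" by linarith
  then show "\<exists>D. ((\<lambda>x. sir_integral R0 x 0) has_real_derivative D) (at z) \<and> D < 0"
    using has_real_derivative_sir_integral_susceptible[of R0 z] by (auto intro!: mult_pos_neg)
qed (auto simp: sir_integral_def intro!: continuous_intros)

lemma sir_integral_has_derivative:
  assumes "sir_trajectory \<beta> s i" "t \<ge> 0"
  shows "((\<lambda>t. sir_integral R0 (s t) (i t)) has_real_derivative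
           exp (- R0 * (s t + i t)) * s t * i t * (R0 - \<beta> t)) (at t within {0..})"
proof -
  have "((\<lambda>t. sir_integral R0 (s t) (i t)) has_real_derivative
          - \<beta> t * s t * i t * exp (- R0 * (s t + i t)) + s t * (exp (- R0 * (s t + i t)) *
            (- R0 * (- \<beta> t * s t * i t + (\<beta> t * s t - 1) * i t)))) (at t within {0..})"
    using assms unfolding sir_trajectory_def sir_integral_def by (auto intro!: derivative_eq_intros)
  then show ?thesis by (simp add: algebra_simps)
qed

lemma sir_total_has_derivative:
  assumes "sir_trajectory \<beta> s i" "t \<ge> 0"
  shows "((\<lambda>t. s t + i t) has_real_derivative - i t) (at t within {0..})"
proof -
  have "((\<lambda>t. s t + i t) has_real_derivative - \<beta> t * s t * i t + (\<beta> t * s t - 1) * i t)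
          (at t within {0..})"
    using assms unfolding sir_trajectory_def by (auto intro!: derivative_eq_intros)
  then show ?thesis by (simp add: algebra_simps)
qed

lemma sir_total_le_initial:
  assumes "sir_trajectory \<beta> s i" "\<forall>t\<ge>0. i t \<ge> 0" "t \<ge> 0"
  shows "s t + i t \<le> s 0 + i 0"
proof -
  have "\<forall>t\<ge>0. ((\<lambda>t. - (s t + i t)) has_real_derivative i t) (at t within {0..})"
    using DERIV_minus[OF sir_total_has_derivative[OF assms(1)]] by simp
  then have "mono_on {0..} (\<lambda>t. - (s t + i t))"
    using assms(2) by (rule mono_on_atLeast_if_has_real_derivative_nonneg)
  then show ?thesis using \<open>t \<ge> 0\<close> by (auto dest: mono_onD[of _ _ 0 t])
qed

lemma sir_integral_constant:
  assumes "sir_trajectory (\<lambda>_. R0) s i" "t \<ge> 0"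
  shows "sir_integral R0 (s t) (i t) = sir_integral R0 (s 0) (i 0)"
proof -
  have "((\<lambda>t. sir_integral R0 (s t) (i t)) has_real_derivative 0) (at u within {0..})"
    if "u \<in> {0..}" for u
    using sir_integral_has_derivative[OF assms(1), of u R0] that by simp
  then obtain c where "\<forall>u\<in>{0..}. sir_integral R0 (s u) (i u) = c"
    using has_field_derivative_zero_constant[of "{0::real..}"] by blast
  with \<open>t \<ge> 0\<close> show ?thesis by simp
qed

lemma sir_integral_mono_on:
  assumes "sir_trajectory \<beta> s i" "\<forall>t\<ge>0. \<beta> t \<le> R0 \<and> s t \<ge> 0 \<and> i t \<ge> 0"
  shows "mono_on {0..} (\<lambda>t. sir_integral R0 (s t) (i t))"
proof (rule mono_on_atLeast_if_has_real_derivative_nonneg)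
  show "\<forall>t\<ge>0. ((\<lambda>t. sir_integral R0 (s t) (i t)) has_real_derivative
          exp (- R0 * (s t + i t)) * s t * i t * (R0 - \<beta> t)) (at t within {0..})"
    using sir_integral_has_derivative[OF assms(1)] by blast
  show "\<forall>t\<ge>0. exp (- R0 * (s t + i t)) * s t * i t * (R0 - \<beta> t) \<ge> 0"
    using assms(2) by simp
qed

lemma sir_integral_tendsto:
  assumes "(s \<longlongrightarrow> s_final) at_top" "(i \<longlongrightarrow> 0) at_top"
  shows "((\<lambda>t. sir_integral R0 (s t) (i t)) \<longlongrightarrow> sir_integral R0 s_final 0) at_top"
  unfolding sir_integral_def by (intro tendsto_intros assms)

lemma sir_final_integral_eq:
  assumes "sir_trajectory (\<lambda>_. R0) s i" "(s \<longlongrightarrow> s_final) at_top" "(i \<longlongrightarrow> 0) at_top"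
  shows "sir_integral R0 s_final 0 = sir_integral R0 (s 0) (i 0)"
proof (rule tendsto_unique[OF trivial_limit_at_top_linorder])
  show "((\<lambda>t. sir_integral R0 (s t) (i t)) \<longlongrightarrow> sir_integral R0 s_final 0) at_top"
    using assms(2,3) by (rule sir_integral_tendsto)
  have "\<forall>\<^sub>F t in at_top. sir_integral R0 (s t) (i t) = sir_integral R0 (s 0) (i 0)"
    using eventually_ge_at_top[of 0] by eventually_elim (rule sir_integral_constant[OF assms(1)])
  then show "((\<lambda>t. sir_integral R0 (s t) (i t)) \<longlongrightarrow> sir_integral R0 (s 0) (i 0)) at_top"
    by (rule tendsto_eventually)
qed

lemma sir_final_integral_ge:
  assumes "sir_trajectory \<beta> s i" "\<forall>t\<ge>0. \<beta> t \<le> R0 \<and> s t \<ge> 0 \<and> i t \<ge> 0"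
    and "(s \<longlongrightarrow> s_final) at_top" "(i \<longlongrightarrow> 0) at_top"
  shows "sir_integral R0 (s 0) (i 0) \<le> sir_integral R0 s_final 0"
proof (rule tendsto_lowerbound[OF sir_integral_tendsto[OF assms(3,4)]])
  show "\<forall>\<^sub>F t in at_top. sir_integral R0 (s 0) (i 0) \<le> sir_integral R0 (s t) (i t)"
    using eventually_ge_at_top[of 0]
    by eventually_elim (rule mono_onD[OF sir_integral_mono_on[OF assms(1,2)]], auto)
qed simp

lemma sir_susceptible_below_level:
  assumes "R0 > 0" and traj: "sir_trajectory (\<lambda>_. R0) s i"
    and "0 < m" "s 0 < m" "sir_integral R0 (s 0) (i 0) < sir_integral R0 m 0" "t \<ge> 0"
  shows "s t < m"
proof (rule ccontr)
  assume "\<not> s t < m"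
  have deriv: "\<forall>u\<ge>0. (s has_real_derivative - R0 * s u * i u) (at u within {0..})"
    using traj by (simp add: sir_trajectory_def)
  obtain t\<^sub>m where "0 < t\<^sub>m" "s t\<^sub>m = m" and below: "\<forall>u\<in>{0..<t\<^sub>m}. s u < m"
    using first_hitting_time[OF continuous_on_atLeast_if_has_real_derivative[OF deriv]]
      \<open>s 0 < m\<close> \<open>t \<ge> 0\<close> \<open>\<not> s t < m\<close> by (metis not_less)
  have "i t\<^sub>m \<le> 0" \<comment> \<open>otherwise s would be decreasing at the first time it reaches m\<close>
  proof (rule ccontr)
    assume "\<not> i t\<^sub>m \<le> 0"
    with \<open>R0 > 0\<close> \<open>0 < m\<close> have "- R0 * s t\<^sub>m * i t\<^sub>m < 0"
      by (simp add: \<open>s t\<^sub>m = m\<close> mult_pos_pos)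
    then obtain d where "d > 0" and dec: "\<forall>h>0. t\<^sub>m - h \<in> {0..} \<longrightarrow> h < d \<longrightarrow> s t\<^sub>m < s (t\<^sub>m - h)"
      using has_real_derivative_neg_dec_left deriv \<open>0 < t\<^sub>m\<close> by (metis less_imp_le)
    define h where "h = min (d / 2) (t\<^sub>m / 2)"
    have "s t\<^sub>m < s (t\<^sub>m - h)" using dec \<open>d > 0\<close> \<open>0 < t\<^sub>m\<close> by (simp add: h_def)
    moreover have "s (t\<^sub>m - h) < m" using below \<open>d > 0\<close> \<open>0 < t\<^sub>m\<close> by (simp add: h_def)
    ultimately show False using \<open>s t\<^sub>m = m\<close> by simp
  qed
  then have "sir_integral R0 m 0 \<le> sir_integral R0 m (i t\<^sub>m)"
    using \<open>R0 > 0\<close> \<open>0 < m\<close> by (simp add: sir_integral_def mult_nonneg_nonpos)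
  also have "\<dots> = sir_integral R0 (s 0) (i 0)"
    using sir_integral_constant[OF traj, of t\<^sub>m] \<open>0 < t\<^sub>m\<close> \<open>s t\<^sub>m = m\<close> by simp
  finally show False using assms(5) by simp
qed

lemma sir_final_size_le_threshold:
  assumes "R0 > 0" and traj: "sir_trajectory (\<lambda>_. R0) s i" and "s 0 > 0" "i 0 > 0"
    and lim: "(s \<longlongrightarrow> s_final) at_top" "(i \<longlongrightarrow> 0) at_top"
  shows "s_final \<le> 1 / R0"
proof (rule ccontr)
  assume "\<not> s_final \<le> 1 / R0"
  have final: "sir_integral R0 s_final 0 = sir_integral R0 (s 0) (i 0)"
    using traj lim by (rule sir_final_integral_eq)
  have initial: "sir_integral R0 (s 0) (i 0) < sir_integral R0 (s 0) 0"
    using \<open>R0 > 0\<close> \<open>s 0 > 0\<close> \<open>i 0 > 0\<close> by (simp add: sir_integral_def)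
  show False
  proof (cases "s_final \<le> s 0")
    case True
    with \<open>\<not> s_final \<le> 1 / R0\<close> have "sir_integral R0 (s 0) 0 \<le> sir_integral R0 s_final 0"
      using sir_integral_strict_antimono_above_threshold[OF \<open>R0 > 0\<close>, of s_final "s 0"]
      by (cases "s_final = s 0") auto
    with final initial show False by simp
  next
    case False
    define m where "m = (max (s 0) (1 / R0) + s_final) / 2"
    have m: "s 0 < m" "1 / R0 < m" "m < s_final"
      using False \<open>\<not> s_final \<le> 1 / R0\<close> by (auto simp: m_def)
    have "sir_integral R0 (s 0) (i 0) < sir_integral R0 m 0"
      using sir_integral_strict_antimono_above_threshold[OF \<open>R0 > 0\<close>, of m s_final] m final by simp
    then have below: "s t < m" if "t \<ge> 0" for t
      using sir_susceptible_below_level[OF \<open>R0 > 0\<close> traj] m \<open>s 0 > 0\<close> that by auto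
    have "\<forall>\<^sub>F t in at_top. s t \<le> m"
      using eventually_ge_at_top[of 0] by eventually_elim (simp add: below less_imp_le)
    then have "s_final \<le> m"
      by (rule tendsto_upperbound[OF lim(1)]) simp
    with m show False by simp
  qed
qed

lemma mitigated_rate_le:
  assumes traj: "sir_trajectory (\<lambda>t. R0 * (1 / (1 + kappa (i t)))) s i"
    and "R0 > 0" "\<forall>x\<in>{0..1}. kappa x \<ge> 0" "\<forall>t\<ge>0. s t \<ge> 0 \<and> i t \<ge> 0"
    and "s 0 + i 0 \<le> 1" "t \<ge> 0"
  shows "R0 * (1 / (1 + kappa (i t))) \<le> R0"
proof -
  have "s t + i t \<le> 1"
    using sir_total_le_initial[OF traj] assms(4-6) by fastforce
  with assms(4,6) have "i t \<in> {0..1}" by force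
  with assms(3) have "kappa (i t) \<ge> 0" by blast
  with \<open>R0 > 0\<close> show ?thesis by (simp add: field_simps)
qed

theorem corollary1:
  fixes R0 s0 i0 sbar sbar0 :: real
    and kappa s i sc ic :: "real \<Rightarrow> real"
  assumes R0_pos: "R0 > 0"
    and kappa_nonneg: "\<forall>x\<in>{0..1}. kappa x \<ge> 0"
    and kappa_mono: "mono_on {0..1} kappa"
    and kappa0: "kappa 0 = 0"
    and s0_nonneg: "s0 \<ge> 0" and i0_pos: "i0 > 0" and sum1: "s0 + i0 = 1"
    and outbreak: "s0 * R0 > 1 + kappa i0"
    and s_ode: "\<forall>t\<ge>0. (s has_real_derivative (- R0 * (1 / (1 + kappa (i t))) * s t * i t)) (at t within {0..})"
    and i_ode: "\<forall>t\<ge>0. (i has_real_derivative ((R0 * (1 / (1 + kappa (i t))) * s t - 1) * i t)) (at t within {0..})"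
    and s_init: "s 0 = s0" and i_init: "i 0 = i0"
    and nonneg: "\<forall>t\<ge>0. s t \<ge> 0 \<and> i t \<ge> 0"
    and s_lim: "(s \<longlongrightarrow> sbar) at_top" and i_lim: "(i \<longlongrightarrow> 0) at_top"
    and sc_ode: "\<forall>t\<ge>0. (sc has_real_derivative (- R0 * sc t * ic t)) (at t within {0..})"
    and ic_ode: "\<forall>t\<ge>0. (ic has_real_derivative ((R0 * sc t - 1) * ic t)) (at t within {0..})"
    and sc_init: "sc 0 = s0" and ic_init: "ic 0 = i0"
    and sc_lim: "(sc \<longlongrightarrow> sbar0) at_top" and ic_lim: "(ic \<longlongrightarrow> 0) at_top"
  shows "sbar \<ge> sbar0"
proof -
  define \<beta> where "\<beta> t = R0 * (1 / (1 + kappa (i t)))" for t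
  have fsir: "sir_trajectory \<beta> s i"
    using s_ode i_ode by (simp add: sir_trajectory_def \<beta>_def)
  have sir: "sir_trajectory (\<lambda>_. R0) sc ic"
    using sc_ode ic_ode by (simp add: sir_trajectory_def)
  have "i0 \<le> 1" using sum1 s0_nonneg by linarith
  with kappa_nonneg i0_pos have "kappa i0 \<ge> 0" by simp
  with outbreak have "s0 * R0 > 1" by linarith
  with s0_nonneg have "s0 > 0" by (cases "s0 = 0") auto
  have "\<forall>\<^sub>F t in at_top. s t \<ge> 0"
    using eventually_ge_at_top[of 0] by eventually_elim (use nonneg in blast)
  with s_lim have "sbar \<ge> 0" by (rule tendsto_lowerbound) simp
  have "\<beta> t \<le> R0" if "t \<ge> 0" for t
    unfolding \<beta>_def using mitigated_rate_le[OF fsir[unfolded \<beta>_def] R0_pos kappa_nonneg nonneg]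
      s_init i_init sum1 that by simp
  then have "sir_integral R0 s0 i0 \<le> sir_integral R0 sbar 0"
    using sir_final_integral_ge[OF fsir _ s_lim i_lim] nonneg s_init i_init by auto
  moreover have "sir_integral R0 sbar0 0 = sir_integral R0 s0 i0"
    using sir_final_integral_eq[OF sir sc_lim ic_lim] sc_init ic_init by simp
  moreover have "sbar0 \<le> 1 / R0"
    using sir_final_size_le_threshold[OF R0_pos sir _ _ sc_lim ic_lim] sc_init ic_init
      \<open>s0 > 0\<close> i0_pos by simp
  ultimately show ?thesis
    using sir_integral_strict_mono_below_threshold[OF R0_pos, of sbar sbar0] \<open>sbar \<ge> 0\<close>
    by (metis not_le)
qed

end
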